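(* Let $K$ be a commutative unital ring, $k,n\in\mathbb{N}^*$, $\bar a,\bar b=(b_1,\dots,b_k),\bar c=(c_1,\dots,c_k)\in K^k$, $d_i:=b_ic_i$, $\bar d:=(d_1,\dots,d_k)$, and let $p(x):=\det(xI_n-T^k_n(\bar a,\bar b,\bar c))\in K[x]$. If $n\le k$ then $p(x)=\alpha^{\bar x-\bar a,-\bar d}(n,k)$. If $n>k$, write $n=mk+r$ with $0\le r<k$, $d:=d_1\cdots d_k$, $U^x(i):=U_i(\pi^{\bar x-\bar a,-\bar d}(k,k),d)\in K[x]$; then \[p(x)=U^x(m)\alpha^{\bar x-\bar a,-\bar d}(k+r,k)-dU^x(m-1)\alpha^{\bar x-\bar a,-\bar d}(r,k)=U^x(m+1)\alpha^{\bar x-\bar a,-\bar d}(r,k)+d_kd_1\cdots d_rU^x(m)\alpha^{\bar x-\bar a,-\bar d}_{r+1}(k-r-2,k),\] and in particular if $r=k-1$ then $p(x)=U^x(m+1)\alpha^{\bar x-\bar a,-\bar d}(k-1,k)$. Moreover, if $b_{i_1}=\dots=b_{i_q}=0$ or $c_{i_1}=\dots=c_{i_q}=0$ for some $q\ge1$, $1\le i_1<\dots<i_q\le k$ with $n>i_1$, then with $i_{q+1}:=i_1+k$, $i_0:=i_q$, $(r',p_0):=(r+k,0)$ if $r\le i_1$ and otherwise $r':=r$ and $p_0\in\mathbb{N}^*$ with $i_{p_0}<r\le i_{p_0+1}$, $m_j:=1$ if $j<p_0$ and $0$ if $j\ge p_0$ (for $1\le j<q$), $m_q:=0$ if $p_0>0$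 or $m=0$ and $m_q:=-1$ if $p_0=0$, we have \[p(x)=\alpha^{\bar x-\bar a,-\bar d}(i_1,k)\prod_{j=1}^q\big(\alpha^{\bar x-\bar a,-\bar d}_{i_j}(i_{j+1}-i_j,k)\big)^{m+m_j}\alpha^{\bar x-\bar a,-\bar d}_{i_{p_0}}(r'-i_{p_0},k).\]
   Context: Vectors are extended periodically; $\bar x:=(x,\dots,x)\in K[x]^k$ and $\bar x-\bar a$, $-\bar d$ are componentwise. $T^k_n(\bar a,\bar b,\bar c)\in M_n(K)$ is the tridiagonal matrix with diagonal $a_1,\dots,a_n$, superdiagonal $b_1,\dots,b_{n-1}$, subdiagonal $c_1,\dots,c_{n-1}$ (periodic indices). $U_m(x,y):=\sum_{i=0}^{\lfloor (m-1)/2\rfloor}(-1)^i\binom{m-1-i}{i}x^{m-1-2i}y^i$. In $P=\mathbb{Z}[x_1,\dots,x_k,y_1,\dots,y_k]$ indices are periodic; shift $f_s:=f(x_{s+1},\dots,x_{s+k},y_{s+1},\dots,y_{s+k})$; for vectors $\bar u,\bar e$ over a commutative ring $R$, $f^{\bar u,\bar e}\in R$ is the image under $x_i\mapsto u_i$, $y_i\mapsto e_i$, and $f_s^{\bar u,\bar e}:=(f_s)^{\bar u,\bar e}$. Write $[r]=\{1,\dots,r\}$, $S+1=\{s+1:s\in S\}$. For $0\le r\le k$, $\alpha(r,k):=\sum_{S}\prod_{i\in S}y_i\prod_{j\in[r]\setminus(S\cup(S+1))}x_j$ over $S\subseteq\{1,\dots,r-1\}$ with no two consecutive integers; $\alpha(-1,k):=0$;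 for $r>k$, $\alpha(r,k):=x_r\alpha(r-1,k)+y_{r-1}\alpha(r-2,k)$; $\alpha_s(r,k):=(\alpha(r,k))_s$. $\beta(0,k)=\beta(1,k):=0$; for $2\le r\le k+1$, $\beta(r,k):=\sum_S y_k\prod_{i\in S}y_i\prod_{j\in\{2,\dots,r-1\}\setminus(S\cup(S+1))}x_j$ over $S\subseteq\{2,\dots,r-2\}$ with no two consecutive integers. $\pi(r,k):=\alpha(r,k)+\beta(r,k)$. *)

theory Defs
  imports "Jordan_Normal_Form.Determinant" "HOL-Computational_Algebra.Polynomial"
begin

text \<open>Periodic extension of a vector given on indices 1..k: index i (i \<ge> 0) is read as
  ((i - 1) mod k) + 1, computed as ((i + k - 1) mod k) + 1 (so index 0 means index k).\<close>
definition per :: "nat \<Rightarrow> (nat \<Rightarrow> 'a) \<Rightarrow> nat \<Rightarrow> 'a" where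
  "per k f i = f ((i + k - 1) mod k + 1)"

text \<open>The tridiagonal n x n matrix T^k_n(a,b,c) (0-based matrix indices, periodic vector indices):
  diagonal a_1..a_n, superdiagonal b_1..b_(n-1), subdiagonal c_1..c_(n-1).\<close>
definition tridiag :: "nat \<Rightarrow> nat \<Rightarrow> (nat \<Rightarrow> 'a::zero) \<Rightarrow> (nat \<Rightarrow> 'a) \<Rightarrow> (nat \<Rightarrow> 'a) \<Rightarrow> 'a mat" where
  "tridiag k n a b c = mat n n (\<lambda>(i, j).
     if i = j then per k a (i + 1)
     else if j = i + 1 then per k b (i + 1)
     else if i = j + 1 then per k c (j + 1)
     else 0)"

definition chebU :: "nat \<Rightarrow> 'a::comm_ring_1 \<Rightarrow> 'a \<Rightarrow> 'a" where
  "chebU m x y = (if m = 0 then 0 else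
     (\<Sum>i = 0..(m - 1) div 2. (-1) ^ i * of_nat ((m - 1 - i) choose i) * x ^ (m - 1 - 2 * i) * y ^ i))"

text \<open>Evaluations f^{u,e} of the polynomials alpha, beta, pi of P, where u, e are the
  (periodically extended) images of x_i, y_i.  Sets S with no two consecutive integers.\<close>
definition nocons :: "nat set \<Rightarrow> bool" where
  "nocons S \<longleftrightarrow> (\<forall>i\<in>S. Suc i \<notin> S)"

definition alpha_le :: "(nat \<Rightarrow> 'a::comm_ring_1) \<Rightarrow> (nat \<Rightarrow> 'a) \<Rightarrow> nat \<Rightarrow> 'a" where
  "alpha_le u e r = (\<Sum>S\<in>{S. S \<subseteq> {1..<r} \<and> nocons S}.
      (\<Prod>i\<in>S. e i) * (\<Prod>j\<in>{1..r} - (S \<union> Suc ` S). u j))"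

fun alpha_nat :: "nat \<Rightarrow> (nat \<Rightarrow> 'a::comm_ring_1) \<Rightarrow> (nat \<Rightarrow> 'a) \<Rightarrow> nat \<Rightarrow> 'a" where
  "alpha_nat k u e 0 = alpha_le u e 0"
| "alpha_nat k u e (Suc 0) = alpha_le u e 1"
| "alpha_nat k u e (Suc (Suc r)) =
     (if Suc (Suc r) \<le> k then alpha_le u e (Suc (Suc r))
      else u (Suc (Suc r)) * alpha_nat k u e (Suc r) + e (Suc r) * alpha_nat k u e r)"

definition alpha :: "nat \<Rightarrow> (nat \<Rightarrow> 'a::comm_ring_1) \<Rightarrow> (nat \<Rightarrow> 'a) \<Rightarrow> int \<Rightarrow> 'a" where
  "alpha k u e r = (if r < 0 then 0 else alpha_nat k u e (nat r))"

definition alpha_s :: "nat \<Rightarrow> nat \<Rightarrow> (nat \<Rightarrow> 'a::comm_ring_1) \<Rightarrow> (nat \<Rightarrow> 'a) \<Rightarrow> int \<Rightarrow> 'a" where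
  "alpha_s s k u e r = alpha k (\<lambda>i. u (s + i)) (\<lambda>i. e (s + i)) r"

text \<open>beta^{u,e}(r,k) (meaningful for r \<le> k+1); beta(0,k) = beta(1,k) = 0.\<close>
definition beta :: "nat \<Rightarrow> (nat \<Rightarrow> 'a::comm_ring_1) \<Rightarrow> (nat \<Rightarrow> 'a) \<Rightarrow> nat \<Rightarrow> 'a" where
  "beta k u e r = (if r < 2 then 0 else
     (\<Sum>S\<in>{S. S \<subseteq> {2..r - 2} \<and> nocons S}.
        e k * (\<Prod>i\<in>S. e i) * (\<Prod>j\<in>{2..r - 1} - (S \<union> Suc ` S). u j)))"

definition pi_ev :: "nat \<Rightarrow> (nat \<Rightarrow> 'a::comm_ring_1) \<Rightarrow> (nat \<Rightarrow> 'a) \<Rightarrow> nat \<Rightarrow> 'a" where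
  "pi_ev k u e r = alpha k u e (int r) + beta k u e r"

text \<open>The evaluation vectors xbar - abar and -dbar over K[x] (periodically extended).\<close>
definition xa :: "nat \<Rightarrow> (nat \<Rightarrow> 'a::comm_ring_1) \<Rightarrow> nat \<Rightarrow> 'a poly" where
  "xa k a i = [: - per k a i, 1 :]"

definition md :: "nat \<Rightarrow> (nat \<Rightarrow> 'a::comm_ring_1) \<Rightarrow> (nat \<Rightarrow> 'a) \<Rightarrow> nat \<Rightarrow> 'a poly" where
  "md k b c i = [: - (per k b i * per k c i) :]"

definition charp :: "nat \<Rightarrow> nat \<Rightarrow> (nat \<Rightarrow> 'a::comm_ring_1) \<Rightarrow> (nat \<Rightarrow> 'a) \<Rightarrow> (nat \<Rightarrow> 'a) \<Rightarrow> 'a poly" where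
  "charp k n a b c = det ([:0, 1:] \<cdot>\<^sub>m 1\<^sub>m n - map_mat (\<lambda>t. [:t:]) (tridiag k n a b c))"

end

theory Submission
  imports Defs
begin

(* Expanding det(xI - T) along its last row shows that p satisfies the three-term recurrence
   of a continuant K, and summing over the sets S of non-consecutive indices shows the same for
   alpha(r,k).  Splitting a continuant at a position s gives
     K(s + l + 1) = K(s + 1) K_s(l + 1) + e_s K(s) K_(s+1)(l).
   For k-periodic coefficients, splitting at multiples of k shows that the pairs
   (K(tk + 1), K(tk)) are propagated by one fixed 2x2 transfer matrix, whose trace is pi(k,k)
   and whose determinant is d by a Casoratian identity.  By Cayley-Hamilton the values
   K(tk + r + 1) then satisfy y(t + 2) = pi y(t + 1) - d y(t), which the Chebyshev polynomials
   U_m(pi, d) solve.  If b_i c_i = 0 at i_1 < ... < i_q, the coupling e vanishes at these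
   positions and their translates by multiples of k, and splitting at each of them factors p
   into periodically repeating blocks. *)

section \<open>Continuants and tridiagonal determinants\<close>

lemma nat_induct_two_step [case_names 0 1 Suc_Suc]:
  assumes "P 0" "P 1" "\<And>n. P n \<Longrightarrow> P (Suc n) \<Longrightarrow> P (Suc (Suc n))"
  shows "P n"
proof -
  have "P n \<and> P (Suc n)" by (induction n) (use assms in auto)
  then show ?thesis ..
qed

abbreviation (input) shift :: "nat \<Rightarrow> (nat \<Rightarrow> 'a) \<Rightarrow> nat \<Rightarrow> 'a" where
  "shift s f \<equiv> \<lambda>i. f (s + i)"

(* continuant u e (r + 1) is alpha^(u,e)(r); the value at 0 plays the role of alpha(-1) = 0. *)
fun continuant :: "(nat \<Rightarrow> 'a::comm_ring_1) \<Rightarrow> (nat \<Rightarrow> 'a) \<Rightarrow> nat \<Rightarrow> 'a" where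
  "continuant u e 0 = 0"
| "continuant u e (Suc 0) = 1"
| "continuant u e (Suc (Suc l)) = u (Suc l) * continuant u e (Suc l) + e l * continuant u e l"

definition tridiag_mat :: "nat \<Rightarrow> (nat \<Rightarrow> 'a::zero) \<Rightarrow> (nat \<Rightarrow> 'a) \<Rightarrow> (nat \<Rightarrow> 'a) \<Rightarrow> 'a mat" where
  "tridiag_mat n p q s = mat n n (\<lambda>(i, j).
     if i = j then p i else if j = Suc i then q i else if i = Suc j then s j else 0)"

lemma det_tridiag_mat_0: "det (tridiag_mat 0 p q s) = 1"
  by (simp add: tridiag_mat_def det_def)

lemma det_tridiag_mat_1: "det (tridiag_mat (Suc 0) p q s) = p 0"
  by (simp add: tridiag_mat_def det_def)

lemma det_tridiag_mat_Suc_Suc: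
  "det (tridiag_mat (Suc (Suc n)) p q s)
     = p (Suc n) * det (tridiag_mat (Suc n) p q s) - q n * s n * det (tridiag_mat n p q s)"
proof -
  let ?A = "tridiag_mat (Suc (Suc n)) p q s"
  let ?B = "mat_delete ?A (Suc n) n"
  have A: "?A \<in> carrier_mat (Suc (Suc n)) (Suc (Suc n))"
    and B: "?B \<in> carrier_mat (Suc n) (Suc n)"
    by (simp_all add: tridiag_mat_def mat_delete_def)
  have "det ?B = (\<Sum>i<Suc n. ?B $$ (i, n) * cofactor ?B i n)"
    by (rule laplace_expansion_column[OF B]) simp
  also have "\<dots> = ?B $$ (n, n) * cofactor ?B n n"
    by (simp add: sum.neutral tridiag_mat_def mat_delete_def)
  also have "mat_delete ?B n n = tridiag_mat n p q s"
    by (rule eq_matI) (auto simp: tridiag_mat_def mat_delete_def)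
  then have "cofactor ?B n n = det (tridiag_mat n p q s)"
    by (simp add: cofactor_def)
  finally have det_B: "det ?B = q n * det (tridiag_mat n p q s)"
    by (simp add: tridiag_mat_def mat_delete_def)
  have "det ?A = (\<Sum>j<Suc (Suc n). ?A $$ (Suc n, j) * cofactor ?A (Suc n) j)"
    by (rule laplace_expansion_row[OF A]) simp
  also have "\<dots> = ?A $$ (Suc n, n) * cofactor ?A (Suc n) n
      + ?A $$ (Suc n, Suc n) * cofactor ?A (Suc n) (Suc n)"
    by (simp add: sum.neutral tridiag_mat_def)
  also have "mat_delete ?A (Suc n) (Suc n) = tridiag_mat (Suc n) p q s"
    by (rule eq_matI) (auto simp: tridiag_mat_def mat_delete_def)
  then have "cofactor ?A (Suc n) (Suc n) = det (tridiag_mat (Suc n) p q s)"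
    by (simp add: cofactor_def)
  finally show ?thesis
    using det_B by (simp add: cofactor_def tridiag_mat_def)
qed

lemma det_tridiag_mat_continuant:
  assumes "\<And>i. q i * s i = - e (Suc i)"
  shows "det (tridiag_mat n (\<lambda>i. u (Suc i)) q s) = continuant u e (Suc n)"
  by (induction n rule: nat_induct_two_step)
     (simp_all add: det_tridiag_mat_0 det_tridiag_mat_1 det_tridiag_mat_Suc_Suc assms)

definition nocons_subsets :: "nat \<Rightarrow> nat set set" where
  "nocons_subsets r = {S. S \<subseteq> {1..<r} \<and> nocons S}"

lemma finite_nocons_subsets: "finite (nocons_subsets r)"
  by (rule finite_subset[of _ "Pow {1..<r}"]) (auto simp: nocons_subsets_def)

lemma nocons_subsets_Suc_Suc:
  "nocons_subsets (Suc (Suc r)) = nocons_subsets (Suc r) \<union> insert (Suc r) ` nocons_subsets r"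
proof
  show "nocons_subsets (Suc r) \<union> insert (Suc r) ` nocons_subsets r \<subseteq> nocons_subsets (Suc (Suc r))"
    by (auto simp: nocons_subsets_def nocons_def subset_iff)
  show "nocons_subsets (Suc (Suc r)) \<subseteq> nocons_subsets (Suc r) \<union> insert (Suc r) ` nocons_subsets r"
  proof
    fix S assume S: "S \<in> nocons_subsets (Suc (Suc r))"
    show "S \<in> nocons_subsets (Suc r) \<union> insert (Suc r) ` nocons_subsets r"
    proof (cases "Suc r \<in> S")
      case True
      then have "r \<notin> S" using S by (auto simp: nocons_subsets_def nocons_def)
      then have "S - {Suc r} \<in> nocons_subsets r"
        using S by (auto simp: nocons_subsets_def nocons_def less_Suc_eq)
      moreover have "S = insert (Suc r) (S - {Suc r})" using True by auto
      ultimately show ?thesis by blast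
    qed (use S in \<open>auto simp: nocons_subsets_def less_Suc_eq\<close>)
  qed
qed

lemma alpha_le_Suc_Suc:
  "alpha_le u e (Suc (Suc r)) = u (Suc (Suc r)) * alpha_le u e (Suc r) + e (Suc r) * alpha_le u e r"
proof -
  define summand where "summand r S = (\<Prod>i\<in>S. e i) * (\<Prod>j\<in>{1..r} - (S \<union> Suc ` S). u j)" for r S
  have alpha_le_sum: "alpha_le u e r = sum (summand r) (nocons_subsets r)" for r
    by (simp add: alpha_le_def nocons_subsets_def summand_def)
  have summand_avoiding: "summand (Suc (Suc r)) S = u (Suc (Suc r)) * summand (Suc r) S"
    if "S \<in> nocons_subsets (Suc r)" for S
  proof -
    have "{1..Suc (Suc r)} - (S \<union> Suc ` S) = insert (Suc (Suc r)) ({1..Suc r} - (S \<union> Suc ` S))"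
      using that by (auto simp: nocons_subsets_def subset_iff)
    then show ?thesis by (simp add: summand_def algebra_simps)
  qed
  have summand_containing: "summand (Suc (Suc r)) (insert (Suc r) S) = e (Suc r) * summand r S"
    if S: "S \<in> nocons_subsets r" for S
  proof -
    have "finite S" "Suc r \<notin> S"
      using S by (auto simp: nocons_subsets_def intro: finite_subset)
    moreover have "{1..Suc (Suc r)} - (insert (Suc r) S \<union> Suc ` insert (Suc r) S) = {1..r} - (S \<union> Suc ` S)"
      using S by (auto simp: nocons_subsets_def subset_iff)
    ultimately show ?thesis by (simp add: summand_def algebra_simps)
  qed
  have disjoint: "nocons_subsets (Suc r) \<inter> insert (Suc r) ` nocons_subsets r = {}"
    by (auto simp: nocons_subsets_def)
  have inj: "inj_on (insert (Suc r)) (nocons_subsets r)"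
    by (rule inj_onI, erule insert_ident[THEN iffD1, rotated 2]) (auto simp: nocons_subsets_def)
  have "alpha_le u e (Suc (Suc r)) = sum (summand (Suc (Suc r))) (nocons_subsets (Suc r))
      + sum (summand (Suc (Suc r))) (insert (Suc r) ` nocons_subsets r)"
    unfolding alpha_le_sum nocons_subsets_Suc_Suc
    by (rule sum.union_disjoint) (simp_all add: finite_nocons_subsets disjoint)
  also have "\<dots> = u (Suc (Suc r)) * alpha_le u e (Suc r) + e (Suc r) * alpha_le u e r"
    unfolding alpha_le_sum sum_distrib_left sum.reindex[OF inj] comp_def
    by (simp add: summand_avoiding summand_containing)
  finally show ?thesis .
qed

lemma alpha_le_continuant: "alpha_le u e r = continuant u e (Suc r)"
proof (induction r rule: nat_induct_two_step)
  case 0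
  have "{S. S \<subseteq> {1..<0::nat} \<and> nocons S} = {{}}" by (auto simp: nocons_def)
  then show ?case by (simp add: alpha_le_def)
next
  case 1
  have "{S. S \<subseteq> {1..<1::nat} \<and> nocons S} = {{}}" by (auto simp: nocons_def)
  then show ?case by (simp add: alpha_le_def)
next
  case (Suc_Suc r)
  then show ?case by (simp add: alpha_le_Suc_Suc)
qed

lemma alpha_continuant: "alpha k u e r = continuant u e (nat (r + 1))"
proof -
  have "alpha_nat k u e r = continuant u e (Suc r)" for r
    by (induction k u e r rule: alpha_nat.induct) (auto simp: alpha_le_continuant)
  then show ?thesis
    by (auto simp: alpha_def Suc_nat_eq_nat_zadd1 add.commute)
qed

lemma alpha_of_nat_continuant: "alpha k u e (int r) = continuant u e (Suc r)"
proof -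
  have "int r + 1 = int (Suc r)" by simp
  then show ?thesis by (simp only: alpha_continuant nat_int)
qed

lemma alpha_s_continuant: "alpha_s s k u e r = continuant (shift s u) (shift s e) (nat (r + 1))"
  by (simp add: alpha_s_def alpha_continuant)

lemma alpha_s_diff_continuant:
  assumes "s \<le> t"
  shows "alpha_s s k u e (int t - int s) = continuant (shift s u) (shift s e) (Suc (t - s))"
proof -
  have "nat (int t - int s + 1) = Suc (t - s)" using assms by simp
  then show ?thesis by (simp add: alpha_s_continuant)
qed

lemma beta_continuant:
  assumes "2 \<le> r"
  shows "beta k u e r = e k * continuant (shift 1 u) (shift 1 e) (r - 1)"
proof -
  have "r - 1 = Suc (r - 2)" using assms by simp
  then have "continuant (shift 1 u) (shift 1 e) (r - 1)
      = (\<Sum>S\<in>nocons_subsets (r - 2). (\<Prod>i\<in>S. e (1 + i)) * (\<Prod>j\<in>{1..r - 2} - (S \<union> Suc ` S). u (1 + j)))"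
    by (simp only: alpha_le_continuant[symmetric]) (simp add: alpha_le_def nocons_subsets_def)
  also have "\<dots> = (\<Sum>S\<in>{S. S \<subseteq> {2..r - 2} \<and> nocons S}. (\<Prod>i\<in>S. e i) * (\<Prod>j\<in>{2..r - 1} - (S \<union> Suc ` S). u j))"
  proof (rule sum.reindex_bij_witness[where i = "image (\<lambda>i. i - 1)" and j = "image Suc"])
    fix S assume "S \<in> nocons_subsets (r - 2)"
    then show "Suc ` S \<in> {S. S \<subseteq> {2..r - 2} \<and> nocons S}"
      by (auto simp: nocons_subsets_def nocons_def)
    show "(\<lambda>i. i - 1) ` Suc ` S = S" by (simp add: image_image)
    have "{2..r - 1} = Suc ` {1..r - 2}" using assms by (auto simp: image_iff intro!: bexI[of _ "_ - 1"])
    then have "{2..r - 1} - (Suc ` S \<union> Suc ` Suc ` S) = Suc ` ({1..r - 2} - (S \<union> Suc ` S))"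
      by (simp only: image_set_diff[OF inj_Suc] image_Un)
    then show "(\<Prod>i\<in>Suc ` S. e i) * (\<Prod>j\<in>{2..r - 1} - (Suc ` S \<union> Suc ` Suc ` S). u j)
        = (\<Prod>i\<in>S. e (1 + i)) * (\<Prod>j\<in>{1..r - 2} - (S \<union> Suc ` S). u (1 + j))"
      by (simp add: prod.reindex)
  next
    fix S assume S: "S \<in> {S. S \<subseteq> {2..r - 2} \<and> nocons S}"
    then have pos: "\<forall>i\<in>S. 2 \<le> i" by auto
    have "Suc ` (\<lambda>i. i - 1) ` S = (\<lambda>i. i) ` S"
      unfolding image_image by (rule image_cong) (use pos in auto)
    then show "Suc ` (\<lambda>i. i - 1) ` S = S" by simp
    have "(\<lambda>i. i - 1) ` S \<subseteq> {1..<r - 2}" using S by force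
    moreover have "nocons ((\<lambda>i. i - 1) ` S)"
      unfolding nocons_def
    proof (intro ballI notI)
      fix j assume "j \<in> (\<lambda>i. i - 1) ` S" "Suc j \<in> (\<lambda>i. i - 1) ` S"
      then obtain i i' where i: "i \<in> S" "i' \<in> S" "j = i - 1" "Suc j = i' - 1" by blast
      then have "i' = Suc i" using pos by fastforce
      then show False using S i by (auto simp: nocons_def)
    qed
    ultimately show "(\<lambda>i. i - 1) ` S \<in> nocons_subsets (r - 2)"
      by (simp add: nocons_subsets_def)
  qed
  finally show ?thesis
    using assms by (simp add: beta_def sum_distrib_left mult.assoc)
qed

lemma continuant_split:
  "continuant u e (s + l + 1) = continuant u e (s + 1) * continuant (shift s u) (shift s e) (l + 1)
     + e s * continuant u e s * continuant (shift (Suc s) u) (shift (Suc s) e) l"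
proof (induction l rule: nat_induct_two_step)
  case (Suc_Suc l)
  let ?C = "continuant (shift s u) (shift s e)" and ?C' = "continuant (shift (Suc s) u) (shift (Suc s) e)"
  have "continuant u e (s + Suc (Suc l) + 1)
      = u (s + l + 2) * continuant u e (s + Suc l + 1) + e (s + l + 1) * continuant u e (s + l + 1)"
    by (simp add: numeral_2_eq_2)
  moreover have "?C (Suc (Suc l) + 1) = u (s + l + 2) * ?C (Suc l + 1) + e (s + l + 1) * ?C (l + 1)"
    by (simp add: numeral_2_eq_2)
  moreover have "?C' (Suc (Suc l)) = u (s + l + 2) * ?C' (Suc l) + e (s + l + 1) * ?C' l"
    by (simp add: numeral_2_eq_2)
  ultimately show ?case
    unfolding Suc_Suc.IH by (simp add: algebra_simps)
qed (simp_all add: algebra_simps)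

lemma continuant_split_zero:
  assumes "e s = 0"
  shows "continuant u e (s + l + 1) = continuant u e (s + 1) * continuant (shift s u) (shift s e) (l + 1)"
  using continuant_split[of u e s l] assms by simp

lemma continuant_casoratian:
  "continuant u e (l + 2) * continuant (shift 1 u) (shift 1 e) l
     - continuant (shift 1 u) (shift 1 e) (l + 1) * continuant u e (l + 1) = - (\<Prod>i = 1..l. - e i)"
proof (induction l)
  case (Suc l)
  let ?C = "continuant (shift 1 u) (shift 1 e)"
  have "continuant u e (Suc l + 2) = u (Suc (Suc l)) * continuant u e (l + 2) + e (Suc l) * continuant u e (l + 1)"
    and "?C (Suc l + 1) = u (Suc (Suc l)) * ?C (l + 1) + e (Suc l) * ?C l"
    by (simp_all add: numeral_2_eq_2)
  moreover have "(\<Prod>i = 1..Suc l. - e i) = (\<Prod>i = 1..l. - e i) * - e (Suc l)"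
    by (simp add: prod.nat_ivl_Suc')
  ultimately show ?case
    using Suc.IH[symmetric] by (simp add: algebra_simps)
qed simp

lemma continuant_cross:
  assumes "r \<le> L"
  shows "continuant (shift 1 u) (shift 1 e) r * continuant u e (L + 1)
       - continuant u e (r + 1) * continuant (shift 1 u) (shift 1 e) L
     = - (\<Prod>i = 1..r. - e i) * continuant (shift (Suc r) u) (shift (Suc r) e) (L - r)"
proof (cases r)
  case (Suc r')
  let ?C = "continuant (shift 1 u) (shift 1 e)"
  let ?R = "continuant (shift r u) (shift r e) (L - r + 1)"
  let ?S = "continuant (shift (Suc r) u) (shift (Suc r) e) (L - r)"
  have split: "continuant u e (L + 1) = continuant u e (r + 1) * ?R + e r * continuant u e r * ?S"
    using continuant_split[of u e r "L - r"] assms by simp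
  have split': "?C L = ?C r * ?R + e r * ?C r' * ?S"
    using continuant_split[of "shift 1 u" "shift 1 e" r' "L - r"] assms Suc by simp
  have cas: "?C r * continuant u e r - continuant u e (r + 1) * ?C r' = (\<Prod>i = 1..r'. - e i)"
    using continuant_casoratian[of u e r'] Suc by (simp add: algebra_simps)
  have "?C r * continuant u e (L + 1) - continuant u e (r + 1) * ?C L
      = e r * ?S * (?C r * continuant u e r - continuant u e (r + 1) * ?C r')"
    unfolding split split' by (simp add: algebra_simps)
  also have "\<dots> = - (\<Prod>i = 1..r. - e i) * ?S"
    unfolding cas using Suc by (simp add: prod.nat_ivl_Suc')
  finally show ?thesis .
qed simp

section \<open>Chebyshev polynomials of the second kind\<close>

definition chebU_summand :: "nat \<Rightarrow> 'a::comm_ring_1 \<Rightarrow> 'a \<Rightarrow> nat \<Rightarrow> 'a" where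
  "chebU_summand m X Y i = (-1) ^ i * of_nat ((m - i) choose i) * X ^ (m - 2 * i) * Y ^ i"

lemma chebU_Suc_sum: "chebU (Suc m) X Y = (\<Sum>i\<le>m. chebU_summand m X Y i)"
proof -
  have "chebU (Suc m) X Y = (\<Sum>i = 0..m div 2. chebU_summand m X Y i)"
    by (simp add: chebU_def chebU_summand_def)
  also have "\<dots> = (\<Sum>i\<le>m. chebU_summand m X Y i)"
    by (rule sum.mono_neutral_left) (auto simp: chebU_summand_def binomial_eq_0)
  finally show ?thesis .
qed

lemma chebU_summand_Suc_Suc:
  "chebU_summand (Suc (Suc m)) X Y (Suc j) = X * chebU_summand (Suc m) X Y (Suc j) - Y * chebU_summand m X Y j"
proof (cases "j \<le> m")
  case True
  have pascal: "(Suc (Suc m) - Suc j) choose Suc j = ((m - j) choose j) + ((m - j) choose Suc j)"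
    using True by (simp add: Suc_diff_le)
  show ?thesis
  proof (cases "Suc j \<le> m - j")
    case True
    then have "m - 2 * j = Suc (m - Suc (2 * j))" "Suc m - 2 * Suc j = m - Suc (2 * j)"
      "Suc (Suc m) - 2 * Suc j = Suc (m - Suc (2 * j))" by simp_all
    then show ?thesis unfolding chebU_summand_def pascal by (simp add: algebra_simps)
  next
    case False
    then have "of_nat ((m - j) choose Suc j) = (0::'a)" by (simp add: binomial_eq_0)
    moreover have "Suc m - Suc j = m - j" "Suc (Suc m) - 2 * Suc j = m - 2 * j" by simp_all
    ultimately show ?thesis unfolding chebU_summand_def pascal of_nat_add by (simp add: algebra_simps)
  qed
qed (simp add: chebU_summand_def binomial_eq_0)

lemma chebU_Suc_Suc: "chebU (Suc (Suc m)) X Y = X * chebU (Suc m) X Y - Y * chebU m X Y"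
proof (cases m)
  case (Suc m')
  have "chebU (Suc (Suc m)) X Y = chebU_summand (Suc m) X Y 0 + (\<Sum>j\<le>m. chebU_summand (Suc m) X Y (Suc j))"
    unfolding chebU_Suc_sum by (rule sum.atMost_Suc_shift)
  also have "(\<Sum>j\<le>m. chebU_summand (Suc m) X Y (Suc j))
      = X * (\<Sum>j\<le>m. chebU_summand m X Y (Suc j)) - Y * (\<Sum>j\<le>m. chebU_summand m' X Y j)"
    unfolding Suc chebU_summand_Suc_Suc by (simp only: sum_distrib_left sum_subtractf)
  also have "(\<Sum>j\<le>m. chebU_summand m X Y (Suc j)) = chebU (Suc m) X Y - chebU_summand m X Y 0"
  proof -
    have "chebU_summand m X Y (Suc m) = 0" by (simp add: chebU_summand_def)
    moreover have "chebU (Suc m) X Y = chebU_summand m X Y 0 + (\<Sum>j\<le>m'. chebU_summand m X Y (Suc j))"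
      unfolding chebU_Suc_sum Suc by (rule sum.atMost_Suc_shift)
    ultimately show ?thesis using Suc by simp
  qed
  also have "(\<Sum>j\<le>m. chebU_summand m' X Y j) = chebU m X Y"
    unfolding Suc chebU_Suc_sum by (simp add: chebU_summand_def binomial_eq_0)
  finally show ?thesis by (simp add: chebU_summand_def Suc algebra_simps)
qed (simp add: chebU_def)

lemma chebU_linear_recurrence:
  assumes "\<And>t. y (Suc (Suc t)) = X * y (Suc t) - Y * y t"
  shows "y (Suc t) = chebU (Suc t) X Y * y 1 - Y * chebU t X Y * y 0"
proof (induction t rule: nat_induct_two_step)
  case (Suc_Suc t)
  show ?case
    unfolding assms[of "Suc t"] Suc_Suc.IH chebU_Suc_Suc[of "Suc t"] chebU_Suc_Suc[of t]
    by (simp add: algebra_simps)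
qed (simp_all add: chebU_def assms[of 0])

section \<open>Periodic coefficients\<close>

lemma periodic_add_mult:
  fixes k t :: nat
  assumes "\<And>x. f (x + k) = f x"
  shows "f (x + t * k) = f x"
proof (induction t)
  case (Suc t)
  have "f (x + Suc t * k) = f ((x + t * k) + k)" by (simp add: algebra_simps)
  then show ?case using assms Suc.IH by simp
qed simp

lemma shift_mult_period:
  fixes k t :: nat
  assumes "\<And>x. f (x + k) = f x"
  shows "shift (t * k + s) f = shift s f"
proof
  fix i
  show "f (t * k + s + i) = f (s + i)"
    using periodic_add_mult[of f k "s + i" t, OF assms] by (simp add: algebra_simps)
qed

context
  fixes u e :: "nat \<Rightarrow> 'a::comm_ring_1" and k :: nat
  assumes period_pos: "k \<ge> 1"
    and u_periodic: "\<And>x. u (x + k) = u x" and e_periodic: "\<And>x. e (x + k) = e x"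
begin

lemma continuant_period_split:
  "continuant u e (t * k + l + 1) = continuant u e (t * k + 1) * continuant u e (l + 1)
     + e k * continuant u e (t * k) * continuant (shift 1 u) (shift 1 e) l"
proof -
  have "shift (t * k) u = u" "shift (t * k) e = e"
    using shift_mult_period[of u k t 0, OF u_periodic] shift_mult_period[of e k t 0, OF e_periodic]
    by simp_all
  moreover have "shift (Suc (t * k)) u = shift 1 u" "shift (Suc (t * k)) e = shift 1 e"
    using shift_mult_period[of u k t 1, OF u_periodic] shift_mult_period[of e k t 1, OF e_periodic]
    by simp_all
  moreover have "e (t * k) = e k"
    using periodic_add_mult[of e k 0 t] e_periodic[of 0] e_periodic by simp
  ultimately show ?thesis using continuant_split[of u e "t * k" l] by simp
qed

lemma period_casoratian:
  "continuant u e (k + 1) * (e k * continuant (shift 1 u) (shift 1 e) (k - 1))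
     - e k * continuant (shift 1 u) (shift 1 e) k * continuant u e k = (\<Prod>i = 1..k. - e i)"
proof -
  let ?C = "continuant (shift 1 u) (shift 1 e)"
  have cas: "continuant u e (k + 1) * ?C (k - 1) - ?C k * continuant u e k = - (\<Prod>i = 1..k - 1. - e i)"
    using continuant_casoratian[of u e "k - 1"] period_pos by simp
  have "continuant u e (k + 1) * (e k * ?C (k - 1)) - e k * ?C k * continuant u e k
      = e k * (continuant u e (k + 1) * ?C (k - 1) - ?C k * continuant u e k)"
    by (simp add: algebra_simps)
  also have "\<dots> = (\<Prod>i = 1..k - 1. - e i) * - e k"
    unfolding cas by simp
  also have "\<dots> = (\<Prod>i = 1..k. - e i)"
    using period_pos prod.nat_ivl_Suc'[of 1 "k - 1" "\<lambda>i. - e i"] by simp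
  finally show ?thesis .
qed

lemma continuant_period_recurrence:
  "continuant u e (Suc (Suc t) * k + r + 1)
     = (continuant u e (k + 1) + e k * continuant (shift 1 u) (shift 1 e) (k - 1))
         * continuant u e (Suc t * k + r + 1)
       - (\<Prod>i = 1..k. - e i) * continuant u e (t * k + r + 1)"
proof -
  let ?C = "continuant (shift 1 u) (shift 1 e)"
  let ?V0 = "\<lambda>t. continuant u e (t * k + 1)" and ?V1 = "\<lambda>t. continuant u e (t * k)"
  have V0_Suc: "?V0 (Suc t) = ?V0 t * continuant u e (k + 1) + e k * ?V1 t * ?C k" for t
    using continuant_period_split[of t k] by (simp add: algebra_simps)
  have V1_Suc: "?V1 (Suc t) = ?V0 t * continuant u e k + e k * ?V1 t * ?C (k - 1)" for t
    using continuant_period_split[of t "k - 1"] period_pos by (simp add: algebra_simps)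
  have y: "continuant u e (t * k + r + 1) = ?V0 t * continuant u e (r + 1) + e k * ?V1 t * ?C r" for t
    using continuant_period_split[of t r] by simp
  show ?thesis
    unfolding y V0_Suc V1_Suc period_casoratian[symmetric] by (simp add: algebra_simps)
qed

lemma continuant_period_chebU:
  "continuant u e (Suc m * k + r + 1)
     = chebU (Suc m) (continuant u e (k + 1) + e k * continuant (shift 1 u) (shift 1 e) (k - 1))
         (\<Prod>i = 1..k. - e i) * continuant u e (k + r + 1)
       - (\<Prod>i = 1..k. - e i) * chebU m (continuant u e (k + 1) + e k * continuant (shift 1 u) (shift 1 e) (k - 1))
         (\<Prod>i = 1..k. - e i) * continuant u e (r + 1)"
  using chebU_linear_recurrence[where y = "\<lambda>t. continuant u e (t * k + r + 1)", OF continuant_period_recurrence]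
  by simp

lemma continuant_period_remainder:
  assumes "r < k"
  shows "continuant u e (k + r + 1)
     = (continuant u e (k + 1) + e k * continuant (shift 1 u) (shift 1 e) (k - 1)) * continuant u e (r + 1)
       + - e k * (\<Prod>i = 1..r. - e i) * continuant (shift (Suc r) u) (shift (Suc r) e) (k - 1 - r)"
proof -
  let ?C = "continuant (shift 1 u) (shift 1 e)"
  let ?S = "continuant (shift (Suc r) u) (shift (Suc r) e) (k - 1 - r)"
  have split: "continuant u e (k + r + 1) = continuant u e (k + 1) * continuant u e (r + 1) + e k * (continuant u e k * ?C r)"
    using continuant_period_split[of 1 r] by simp
  have "?C r * continuant u e k - continuant u e (r + 1) * ?C (k - 1) = - (\<Prod>i = 1..r. - e i) * ?S"
    using continuant_cross[of r "k - 1" u e] assms period_pos by simp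
  then have cross: "continuant u e k * ?C r = continuant u e (r + 1) * ?C (k - 1) - (\<Prod>i = 1..r. - e i) * ?S"
    by (simp add: algebra_simps)
  show ?thesis
    unfolding split cross by (simp add: algebra_simps)
qed

end

section \<open>Vanishing couplings\<close>

lemma continuant_chain:
  assumes "\<forall>h\<le>H. e (c h) = 0" "\<forall>h<H. c h \<le> c (Suc h)" "c H \<le> N"
  shows "continuant u e (N + 1) = continuant u e (c 0 + 1)
     * (\<Prod>h<H. continuant (shift (c h) u) (shift (c h) e) (c (Suc h) - c h + 1))
     * continuant (shift (c H) u) (shift (c H) e) (N - c H + 1)"
  using assms
proof (induction H)
  case 0
  then show ?case
    using continuant_split_zero[of e "c 0" u "N - c 0"] by simp
next
  case (Suc H)
  let ?d = "c (Suc H) - c H"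
  have le: "c H \<le> c (Suc H)" using Suc.prems by simp
  have "continuant (shift (c H) u) (shift (c H) e) (?d + (N - c (Suc H)) + 1)
      = continuant (shift (c H) u) (shift (c H) e) (?d + 1)
        * continuant (shift (c H + ?d) u) (shift (c H + ?d) e) (N - c (Suc H) + 1)"
    using continuant_split_zero[of "shift (c H) e" ?d "shift (c H) u" "N - c (Suc H)"] Suc.prems le
    by (simp add: add.assoc)
  moreover have "?d + (N - c (Suc H)) = N - c H" "c H + ?d = c (Suc H)"
    using Suc.prems le by simp_all
  ultimately have "continuant (shift (c H) u) (shift (c H) e) (N - c H + 1)
      = continuant (shift (c H) u) (shift (c H) e) (?d + 1)
        * continuant (shift (c (Suc H)) u) (shift (c (Suc H)) e) (N - c (Suc H) + 1)"
    by simp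
  then show ?case
    using Suc.IH Suc.prems le by (simp add: algebra_simps)
qed

lemma prod_lessThan_mod:
  fixes f :: "nat \<Rightarrow> 'a::comm_monoid_mult"
  assumes "s \<le> q"
  shows "(\<Prod>h<t * q + s. f (h mod q)) = (\<Prod>j<q. f j) ^ t * (\<Prod>j<s. f j)"
proof -
  have block: "(\<Prod>h<t * q + s. f (h mod q)) = (\<Prod>h<t * q. f (h mod q)) * (\<Prod>j<s. f j)"
    if "s \<le> q" for t s
    using that by (induction s) (simp_all add: algebra_simps)
  have "(\<Prod>h<t * q. f (h mod q)) = (\<Prod>j<q. f j) ^ t"
  proof (induction t)
    case (Suc t)
    have "(\<Prod>h<Suc t * q. f (h mod q)) = (\<Prod>h<t * q + q. f (h mod q))" by (simp add: algebra_simps)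
    then show ?case using block[of q t] Suc.IH by (simp add: algebra_simps)
  qed simp
  then show ?thesis using block[OF assms] by simp
qed

lemma prod_lessThan_mod_power:
  fixes X :: "nat \<Rightarrow> 'a::comm_semiring_1"
  assumes "1 \<le> P" "P \<le> q"
  shows "(\<Prod>h<M * q + (P - 1). X (h mod q + 1)) = (\<Prod>j = 1..q. X j ^ (M + (if j < P then 1 else 0)))"
proof -
  have "(\<Prod>j = 1..q. X j ^ (M + (if j < P then 1 else 0))) = (\<Prod>j = 1..q. X j ^ M * (if j < P then X j else 1))"
    by (rule prod.cong) (auto simp: power_add)
  also have "\<dots> = (\<Prod>j = 1..q. X j) ^ M * (\<Prod>j = 1..q. if j < P then X j else 1)"
    by (simp add: prod.distrib prod_power_distrib)
  also have "(\<Prod>j = 1..q. if j < P then X j else 1) = (\<Prod>j = 1..P - 1. X j)"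
    using assms by (intro prod.mono_neutral_cong_right) auto
  finally show ?thesis
    using prod_lessThan_mod[of "P - 1" q "\<lambda>j. X (j + 1)" M] assms
    by (simp add: prod.atLeast1_atMost_eq)
qed

definition cut_point :: "(nat \<Rightarrow> nat) \<Rightarrow> nat \<Rightarrow> nat \<Rightarrow> nat \<Rightarrow> nat" where
  "cut_point i q k h = h div q * k + i (h mod q + 1)"

lemma cut_point_Suc:
  assumes "i (Suc q) = i 1 + k"
  shows "cut_point i q k (Suc h) = h div q * k + i (Suc (h mod q + 1))"
proof (cases "Suc (h mod q) = q")
  case True
  then have "Suc h mod q = 0" "Suc h div q = Suc (h div q)" by (simp_all add: mod_Suc div_Suc)
  then show ?thesis using True assms by (simp add: cut_point_def)
next
  case False
  then have "Suc h mod q = Suc (h mod q)" "Suc h div q = h div q" by (simp_all add: mod_Suc div_Suc)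
  then show ?thesis by (simp add: cut_point_def)
qed

lemma cut_point_last:
  assumes "1 \<le> P" "P \<le> q"
  shows "cut_point i q k (M * q + (P - 1)) = M * k + i P"
proof -
  obtain p where "P = Suc p" using assms by (cases P) auto
  then show ?thesis using assms by (simp add: cut_point_def)
qed

lemma continuant_periodic_zero_factor:
  fixes i :: "nat \<Rightarrow> nat" and k :: nat
  assumes u_periodic: "\<And>x. u (x + k) = u x" and e_periodic: "\<And>x. e (x + k) = e x"
    and increasing: "\<forall>j\<in>{1..q}. i j < i (Suc j)" and wrap: "i (Suc q) = i 1 + k"
    and zeros: "\<forall>j\<in>{1..q}. e (i j) = 0"
    and P: "1 \<le> P" "P \<le> q" and N: "i P + M * k \<le> N"
  shows "continuant u e (N + 1) = continuant u e (i 1 + 1)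
      * (\<Prod>j = 1..q. continuant (shift (i j) u) (shift (i j) e) (i (Suc j) - i j + 1)
                        ^ (M + (if j < P then 1 else 0)))
      * continuant (shift (i P) u) (shift (i P) e) (N - i P - M * k + 1)"
proof -
  define X where "X j = continuant (shift (i j) u) (shift (i j) e) (i (Suc j) - i j + 1)" for j
  let ?c = "cut_point i q k" and ?H = "M * q + (P - 1)"
  have index: "1 \<le> h mod q + 1" "h mod q + 1 \<le> q" for h
    using P by (simp_all add: Suc_leI)
  have shifts: "shift (?c h) u = shift (i (h mod q + 1)) u" "shift (?c h) e = shift (i (h mod q + 1)) e" for h
    unfolding cut_point_def
    by (rule shift_mult_period[where f = u, OF u_periodic] shift_mult_period[where f = e, OF e_periodic])+
  have c_increasing: "?c h \<le> ?c (Suc h)" for h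
  proof -
    have "i (h mod q + 1) < i (Suc (h mod q + 1))" using increasing index[of h] by simp
    then show ?thesis unfolding cut_point_Suc[OF wrap] by (simp add: cut_point_def)
  qed
  have c_zero: "e (?c h) = 0" for h
  proof -
    have "e (?c h) = e (i (h mod q + 1))"
      using periodic_add_mult[of e k "i (h mod q + 1)" "h div q", OF e_periodic]
      by (simp add: cut_point_def add.commute)
    then show ?thesis using zeros index[of h] by simp
  qed
  have blocks: "continuant (shift (?c h) u) (shift (?c h) e) (?c (Suc h) - ?c h + 1) = X (h mod q + 1)" for h
    unfolding shifts cut_point_Suc[OF wrap] by (simp add: X_def cut_point_def)
  have "continuant u e (N + 1) = continuant u e (?c 0 + 1)
      * (\<Prod>h<?H. continuant (shift (?c h) u) (shift (?c h) e) (?c (Suc h) - ?c h + 1))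
      * continuant (shift (?c ?H) u) (shift (?c ?H) e) (N - ?c ?H + 1)"
    by (rule continuant_chain) (use c_zero c_increasing cut_point_last[OF P] N in auto)
  also have "(\<Prod>h<?H. continuant (shift (?c h) u) (shift (?c h) e) (?c (Suc h) - ?c h + 1))
      = (\<Prod>j = 1..q. X j ^ (M + (if j < P then 1 else 0)))"
    unfolding blocks using prod_lessThan_mod_power[OF P] .
  moreover have "shift (?c ?H) u = shift (i P) u" "shift (?c ?H) e = shift (i P) e"
    unfolding cut_point_last[OF P]
    by (rule shift_mult_period[where f = u, OF u_periodic] shift_mult_period[where f = e, OF e_periodic])+
  ultimately show ?thesis
    using cut_point_last[OF P] by (simp add: X_def cut_point_def add.commute[of "M * k"])
qed

lemma less_of_Suc_steps:
  fixes f :: "nat \<Rightarrow> nat"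
  assumes "\<forall>j\<in>{a..b}. f j < f (Suc j)" "a \<le> j" "j < j'" "j' \<le> Suc b"
  shows "f j < f j'"
  using assms(3,4)
proof (induction j')
  case (Suc j')
  then have "f j' < f (Suc j')" using assms(1,2) by simp
  then show ?case using Suc by (cases "j = j'") auto
qed simp

lemma ex1_interval_index:
  fixes f :: "nat \<Rightarrow> nat"
  assumes increasing: "\<forall>j\<in>{1..q}. f j < f (Suc j)" and "f 1 < r" "r \<le> f (Suc q)"
  shows "\<exists>!t. 1 \<le> t \<and> t \<le> q \<and> f t < r \<and> r \<le> f (t + 1)"
proof (rule ex_ex1I)
  let ?located = "\<lambda>t. 1 \<le> t \<and> t \<le> q \<and> f t < r \<and> r \<le> f (t + 1)"
  show "\<exists>t. ?located t"
    using assms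
  proof (induction q)
    case (Suc q)
    show ?case
    proof (cases "r \<le> f (Suc q)")
      case True
      then have "q \<noteq> 0" using Suc.prems by (metis One_nat_def not_le)
      then show ?thesis using Suc True by (metis atLeastAtMost_iff le_SucI)
    qed (use Suc.prems in auto)
  qed simp
  have mono: "f a \<le> f b" if "1 \<le> a" "a \<le> b" "b \<le> Suc q" for a b
    using less_of_Suc_steps[OF increasing, of a b] that by (cases "a = b") auto
  have ordered: "\<not> t < t'" if "?located t" "?located t'" for t t'
    using mono[of "t + 1" t'] that by auto
  show "t = t'" if "?located t" "?located t'" for t t'
    using ordered[OF that] ordered[OF that(2,1)] by simp
qed

section \<open>The characteristic polynomial of the periodic tridiagonal matrix\<close>

lemma per_add_period: "per k f (i + k) = per k f i"
proof (cases "k = 0")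
  case False
  then have shift_back: "i + k + k - 1 = (i + k - 1) + k" by simp
  show ?thesis by (simp only: per_def shift_back mod_add_self2)
qed simp

lemma per_eq:
  assumes "1 \<le> i" "i \<le> k"
  shows "per k f i = f i"
proof -
  have shift_back: "i + k - 1 = (i - 1) + k" using assms by simp
  have "(i + k - 1) mod k = (i - 1) mod k" by (simp only: shift_back mod_add_self2)
  then show ?thesis using assms by (simp add: per_def)
qed

lemma xa_periodic: "xa k a (i + k) = xa k a i"
  by (simp add: xa_def per_add_period)

lemma md_periodic: "md k b c (i + k) = md k b c i"
  by (simp add: md_def per_add_period)

lemma uminus_md:
  assumes "1 \<le> i" "i \<le> k"
  shows "- md k b c i = [:b i * c i:]"
  using assms by (simp add: md_def per_eq)

lemma prod_uminus_md:
  assumes "r \<le> k"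
  shows "(\<Prod>i = 1..r. - md k b c i) = [:\<Prod>i = 1..r. b i * c i:]"
  using assms by (simp add: uminus_md prod_to_poly)

lemma charp_continuant: "charp k n a b c = continuant (xa k a) (md k b c) (Suc n)"
proof -
  have "[:0, 1:] \<cdot>\<^sub>m 1\<^sub>m n - map_mat (\<lambda>t. [:t:]) (tridiag k n a b c)
      = tridiag_mat n (\<lambda>i. xa k a (Suc i)) (\<lambda>i. - [:per k b (Suc i):]) (\<lambda>i. - [:per k c (Suc i):])"
    by (rule eq_matI) (auto simp: tridiag_mat_def tridiag_def xa_def)
  also have "det \<dots> = continuant (xa k a) (md k b c) (Suc n)"
    by (rule det_tridiag_mat_continuant) (simp add: md_def)
  finally show ?thesis by (simp add: charp_def)
qed

lemma pi_ev_continuant: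
  assumes "k \<ge> 1"
  shows "pi_ev k u e k = continuant u e (k + 1) + e k * continuant (shift 1 u) (shift 1 e) (k - 1)"
proof (cases "k \<ge> 2")
  case True
  then show ?thesis by (simp add: pi_ev_def beta_continuant alpha_of_nat_continuant)
next
  case False
  then have "k = 1" using assms by simp
  then show ?thesis by (simp add: pi_ev_def beta_def alpha_continuant numeral_2_eq_2)
qed

lemma charp_chebU:
  fixes a b c :: "nat \<Rightarrow> 'a::comm_ring_1"
  assumes k: "k \<ge> 1" and n: "k < n"
  defines "u \<equiv> xa k a" and "e \<equiv> md k b c" and "m \<equiv> n div k" and "r \<equiv> n mod k"
    and "d \<equiv> \<Prod>i = 1..k. b i * c i"
  defines "U \<equiv> \<lambda>j. chebU j (pi_ev k u e k) [:d:]"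
  shows "charp k n a b c = U m * alpha k u e (int (k + r)) - [:d:] * U (m - 1) * alpha k u e (int r)"
    and "charp k n a b c = U (m + 1) * alpha k u e (int r)
           + [:b k * c k * (\<Prod>i = 1..r. b i * c i):] * U m * alpha_s (r + 1) k u e (int k - int r - 2)"
    and "r = k - 1 \<Longrightarrow> charp k n a b c = U (m + 1) * alpha k u e (int (k - 1))"
proof -
  have u_periodic: "\<And>x. u (x + k) = u x" and e_periodic: "\<And>x. e (x + k) = e x"
    by (simp_all add: u_def e_def xa_periodic md_periodic)
  have r: "r < k" using k by (simp add: r_def)
  have m: "m \<ge> 1" using n k by (simp add: m_def Suc_le_eq div_greater_zero_iff)
  have n_eq: "n = Suc (m - 1) * k + r" using m by (simp add: m_def r_def)
  have pi: "pi_ev k u e k = continuant u e (k + 1) + e k * continuant (shift 1 u) (shift 1 e) (k - 1)"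
    by (rule pi_ev_continuant[OF k])
  have D: "(\<Prod>i = 1..k. - e i) = [:d:]"
    unfolding e_def d_def by (rule prod_uminus_md) simp
  have charp: "charp k n a b c = continuant u e (n + 1)"
    by (simp add: charp_continuant u_def e_def)
  have first: "continuant u e (n + 1) = U m * continuant u e (k + r + 1) - [:d:] * U (m - 1) * continuant u e (r + 1)"
    using continuant_period_chebU[where u = u and e = e and m = "m - 1" and r = r, OF k u_periodic e_periodic] n_eq m
    unfolding D by (simp add: U_def pi)
  then show "charp k n a b c = U m * alpha k u e (int (k + r)) - [:d:] * U (m - 1) * alpha k u e (int r)"
    unfolding charp alpha_of_nat_continuant by simp
  have "- e k * (\<Prod>i = 1..r. - e i) = [:b k * c k * (\<Prod>i = 1..r. b i * c i):]"
    using k r by (simp add: e_def uminus_md prod_to_poly)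
  moreover have "nat (int k - int r - 2 + 1) = k - 1 - r" using r by simp
  ultimately have remainder: "continuant u e (k + r + 1) = pi_ev k u e k * continuant u e (r + 1)
      + [:b k * c k * (\<Prod>i = 1..r. b i * c i):] * alpha_s (r + 1) k u e (int k - int r - 2)"
    using continuant_period_remainder[where u = u and e = e, OF k u_periodic e_periodic r] by (simp add: pi alpha_s_continuant)
  have recurrence: "U (m + 1) = pi_ev k u e k * U m - [:d:] * U (m - 1)"
    using chebU_Suc_Suc[of "m - 1" "pi_ev k u e k" "[:d:]"] m by (simp add: U_def)
  show second: "charp k n a b c = U (m + 1) * alpha k u e (int r)
      + [:b k * c k * (\<Prod>i = 1..r. b i * c i):] * U m * alpha_s (r + 1) k u e (int k - int r - 2)"
    unfolding charp first remainder recurrence alpha_of_nat_continuant by (simp add: algebra_simps)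
  assume "r = k - 1"
  then have "alpha_s (r + 1) k u e (int k - int r - 2) = 0"
    using k by (simp add: alpha_s_def alpha_def)
  then show "charp k n a b c = U (m + 1) * alpha k u e (int (k - 1))"
    using second \<open>r = k - 1\<close> by simp
qed

(* The cut points are i_j + t k; the last one used, i_P + M k, starts the final factor. *)
lemma zero_factor_indices:
  fixes I :: "nat \<Rightarrow> nat" and mj :: "nat \<Rightarrow> int"
  assumes increasing: "\<forall>j\<in>{1..q}. I j < I (Suc j)" and q: "q \<ge> 1"
    and I_0: "I 0 = I q" and wrap: "I (Suc q) = I 1 + k" and I_q: "I q \<le> k"
    and r: "r < k" and n: "I 1 < m * k + r"
    and p0_def: "p0 = (if r \<le> I 1 then 0 else THE t. 1 \<le> t \<and> t \<le> q \<and> I t < r \<and> r \<le> I (t + 1))"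
    and r'_def: "r' = (if r \<le> I 1 then r + k else r)"
    and mj_def: "mj = (\<lambda>j. if j < q then (if j < p0 then 1 else 0) else (if p0 > 0 \<or> m = 0 then 0 else -1))"
  obtains M P where "1 \<le> P" "P \<le> q" "I P = I p0" "I P + M * k \<le> m * k + r" "I p0 \<le> r'"
    "m * k + r - I P - M * k = r' - I p0"
    "\<And>j. 1 \<le> j \<Longrightarrow> j \<le> q \<Longrightarrow> nat (int m + mj j) = M + (if j < P then 1 else 0)"
proof (cases "r \<le> I 1")
  case True
  then have m: "m \<ge> 1" using n by (cases m) auto
  have p0: "p0 = 0" and r': "r' = r + k" using True by (simp_all add: p0_def r'_def)
  show ?thesis
  proof (rule that[of q "m - 1"])
    show "1 \<le> q" "q \<le> q" "I q = I p0" "I p0 \<le> r'" using q p0 r' I_0 I_q by simp_all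
    show "I q + (m - 1) * k \<le> m * k + r" "m * k + r - I q - (m - 1) * k = r' - I p0"
      using m p0 r' I_0 I_q by (cases m; simp add: algebra_simps)+
    show "nat (int m + mj j) = m - 1 + (if j < q then 1 else 0)" if "1 \<le> j" "j \<le> q" for j
      using that m p0 by (auto simp: mj_def)
  qed
next
  case False
  let ?interval = "\<lambda>t. 1 \<le> t \<and> t \<le> q \<and> I t < r \<and> r \<le> I (t + 1)"
  have "\<exists>!t. ?interval t"
    using ex1_interval_index[OF increasing] False r wrap by simp
  then have "?interval (THE t. ?interval t)" by (rule theI')
  then have interval: "?interval p0" using False by (simp add: p0_def)
  have r': "r' = r" using False by (simp add: r'_def)
  show ?thesis
  proof (rule that[of p0 m])
    show "1 \<le> p0" "p0 \<le> q" "I p0 = I p0" "I p0 + m * k \<le> m * k + r" "I p0 \<le> r'"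
      "m * k + r - I p0 - m * k = r' - I p0"
      using interval r' by auto
    show "nat (int m + mj j) = m + (if j < p0 then 1 else 0)" if "1 \<le> j" "j \<le> q" for j
      using that interval by (auto simp: mj_def)
  qed
qed

lemma charp_zero_factor:
  fixes a b c :: "nat \<Rightarrow> 'a::comm_ring_1" and i :: "nat \<Rightarrow> nat"
  assumes k: "k \<ge> 1" and q: "q \<ge> 1" and i_1: "1 \<le> i 1"
    and increasing: "\<forall>j\<in>{1..<q}. i j < i (Suc j)" and i_q: "i q \<le> k"
    and zeros: "(\<forall>j\<in>{1..q}. b (i j) = 0) \<or> (\<forall>j\<in>{1..q}. c (i j) = 0)" and n: "i 1 < n"
  defines "u \<equiv> xa k a" and "e \<equiv> md k b c" and "m \<equiv> n div k" and "r \<equiv> n mod k"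
    and "I \<equiv> \<lambda>j. if j = 0 then i q else if j = q + 1 then i 1 + k else i j"
  defines "p0 \<equiv> if r \<le> i 1 then 0 else THE t. 1 \<le> t \<and> t \<le> q \<and> I t < r \<and> r \<le> I (t + 1)"
    and "r' \<equiv> if r \<le> i 1 then r + k else r"
  defines "mj \<equiv> \<lambda>j. if j < q then (if j < p0 then 1 else 0) else (if p0 > 0 \<or> m = 0 then 0 else (-1 :: int))"
  shows "charp k n a b c = alpha k u e (int (i 1))
      * (\<Prod>j = 1..q. (alpha_s (I j) k u e (int (I (j + 1)) - int (I j))) ^ nat (int m + mj j))
      * alpha_s (I p0) k u e (int r' - int (I p0))"
proof -
  have u_periodic: "\<And>x. u (x + k) = u x" and e_periodic: "\<And>x. e (x + k) = e x"
    by (simp_all add: u_def e_def xa_periodic md_periodic)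
  have I_i: "I j = i j" if "1 \<le> j" "j \<le> q" for j
    using that by (simp add: I_def)
  have I_increasing: "\<forall>j\<in>{1..q}. I j < I (Suc j)"
    using increasing i_q i_1 by (auto simp: I_def)
  have I_range: "1 \<le> I j \<and> I j \<le> k" if "1 \<le> j" "j \<le> q" for j
    using less_of_Suc_steps[OF I_increasing, of 1 j] less_of_Suc_steps[OF I_increasing, of j q]
      that i_1 i_q I_i[of 1] I_i[of q] q by (cases "j = 1"; cases "j = q") auto
  have I_zero: "\<forall>j\<in>{1..q}. e (I j) = 0"
    using zeros I_range I_i by (auto simp: e_def md_def per_eq)
  have n_eq: "n = m * k + r" by (simp add: m_def r_def)
  have I_1: "I 1 = i 1" using I_i[of 1] q by simp
  have I_0: "I 0 = I q" and wrap: "I (Suc q) = I 1 + k" using q by (simp_all add: I_def)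
  have r: "r < k" using k by (simp add: r_def)
  have n': "I 1 < m * k + r" using n n_eq I_1 by simp
  have p0': "p0 = (if r \<le> I 1 then 0 else THE t. 1 \<le> t \<and> t \<le> q \<and> I t < r \<and> r \<le> I (t + 1))"
    and r'': "r' = (if r \<le> I 1 then r + k else r)"
    using I_1 by (simp_all add: p0_def r'_def)
  have mj': "mj = (\<lambda>j. if j < q then (if j < p0 then 1 else 0) else (if p0 > 0 \<or> m = 0 then 0 else -1))"
    by (simp add: mj_def)
  obtain M P where MP: "1 \<le> P" "P \<le> q" "I P = I p0" "I P + M * k \<le> n" "I p0 \<le> r'"
      "n - I P - M * k = r' - I p0"
      "\<And>j. 1 \<le> j \<Longrightarrow> j \<le> q \<Longrightarrow> nat (int m + mj j) = M + (if j < P then 1 else 0)"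
    using zero_factor_indices[OF I_increasing q I_0 wrap I_range[OF q order.refl, THEN conjunct2] r n' p0' r'' mj']
    unfolding n_eq[symmetric] by blast
  have blocks: "(\<Prod>j = 1..q. continuant (shift (I j) u) (shift (I j) e) (I (Suc j) - I j + 1) ^ (M + (if j < P then 1 else 0)))
      = (\<Prod>j = 1..q. (alpha_s (I j) k u e (int (I (j + 1)) - int (I j))) ^ nat (int m + mj j))"
    using I_increasing MP(7) by (intro prod.cong) (simp_all add: alpha_s_diff_continuant less_imp_le)
  have "charp k n a b c = continuant u e (n + 1)"
    by (simp add: charp_continuant u_def e_def)
  also have "\<dots> = continuant u e (I 1 + 1)
      * (\<Prod>j = 1..q. continuant (shift (I j) u) (shift (I j) e) (I (Suc j) - I j + 1) ^ (M + (if j < P then 1 else 0)))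
      * continuant (shift (I P) u) (shift (I P) e) (n - I P - M * k + 1)"
    by (rule continuant_periodic_zero_factor[where u = u and e = e, OF u_periodic e_periodic I_increasing wrap I_zero MP(1,2,4)])
  finally show ?thesis
    unfolding blocks using MP(3,5,6) I_1 by (simp add: alpha_of_nat_continuant alpha_s_diff_continuant)
qed

theorem corollary6p1:
  fixes a b c :: "nat \<Rightarrow> 'a::comm_ring_1" and k n :: nat
  assumes "k \<ge> 1" and "n \<ge> 1"
  shows "let u = xa k a; e = md k b c; p = charp k n a b c;
             m = n div k; r = n mod k;
             d = (\<Prod>i = 1..k. b i * c i);
             U = (\<lambda>j. chebU j (pi_ev k u e k) [:d:])
         in (n \<le> k \<longrightarrow> p = alpha k u e (int n))
          \<and> (n > k \<longrightarrow>
               p = U m * alpha k u e (int (k + r)) - [:d:] * U (m - 1) * alpha k u e (int r)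
             \<and> p = U (m + 1) * alpha k u e (int r)
                   + [:b k * c k * (\<Prod>i = 1..r. b i * c i):] * U m
                     * alpha_s (r + 1) k u e (int k - int r - 2)
             \<and> (r = k - 1 \<longrightarrow> p = U (m + 1) * alpha k u e (int (k - 1))))
          \<and> (\<forall>q (i :: nat \<Rightarrow> nat).
               q \<ge> 1 \<and> 1 \<le> i 1 \<and> (\<forall>j\<in>{1..<q}. i j < i (Suc j)) \<and> i q \<le> k
               \<and> ((\<forall>j\<in>{1..q}. b (i j) = 0) \<or> (\<forall>j\<in>{1..q}. c (i j) = 0))
               \<and> n > i 1
             \<longrightarrow>
               (let I = (\<lambda>j. if j = 0 then i q else if j = q + 1 then i 1 + k else i j);
                    p0 = (if r \<le> i 1 then 0
                          else (THE t. 1 \<le> t \<and> t \<le> q \<and> I t < r \<and> r \<le> I (t + 1)));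
                    r' = (if r \<le> i 1 then r + k else r);
                    mj = (\<lambda>j. if j < q then (if j < p0 then 1 else 0)
                              else (if p0 > 0 \<or> m = 0 then 0 else (-1 :: int)))
                in p = alpha k u e (int (i 1))
                       * (\<Prod>j = 1..q. (alpha_s (I j) k u e (int (I (j + 1)) - int (I j)))
                                        ^ nat (int m + mj j))
                       * alpha_s (I p0) k u e (int r' - int (I p0))))"
  unfolding Let_def
proof (intro conjI impI allI)
  show "charp k n a b c = alpha k (xa k a) (md k b c) (int n)"
    by (simp add: charp_continuant alpha_of_nat_continuant)
qed (elim conjE | rule charp_chebU[OF assms(1)] charp_zero_factor[OF assms(1)] | assumption)+

end
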